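(* Let $\mathcal{M}=\{(x,y,z):x^2+y^2=1\}$ be the cylinder in $\mathbb{R}^3$ and let $G\to G'$ be a vertex-to-$K_4$ move. If $G$ is generically infinitesimally rigid on $\mathcal{M}$, then $G'$ is generically infinitesimally rigid on $\mathcal{M}$ (that is, the vertex-to-$K_4$ move on the cylinder preserves generic infinitesimal rigidity).
   Context: Vertex-to-$K_4$ move: replace a vertex $v$ of a simple graph by a copy of $K_4$ on four new vertices, each edge $xv$ being replaced by $xw$ for some arbitrarily chosen vertex $w$ of the $K_4$. For a framework $(G,p)$ on $\mathcal{M}$ ($p=(p_1,\dots,p_n)\in\mathcal{M}^n$), the rigidity matrix $R_{\mathcal{M}}(G,p)$ is the $(|E|+|V|)\times 3|V|$ matrix whose row for edge $v_iv_j$ has $p_i-p_j$ in the column triple of $v_i$ and $p_j-p_i$ in that of $v_j$, and whose row for vertex $v_i$ has the normal $N(p_i)=(2x_i,2y_i,0)$ in the triple of $v_i$; its kernel is the space of infinitesimal flexes. Rigid motion flexes are those induced by infinitesimal isometries of $\mathbb{R}^3$ tangential to $\mathcal{M}$ everywhere; $(G,p)$ is infinitesimally rigid if every infinitesimal flex is a rigid motion flex. $(G,p)$ is generic if any rational-coefficient polynomial in the coordinates vanishing at $p$ lies in the ideal generated by $X_i^2+Y_i^2-1$. A graph is generically infinitesimally rigid on $\mathcal{M}$ if its generic frameworks on $\mathcal{M}$ are infinitesimally rigid. *)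

theory Defs
  imports "HOL-Analysis.Analysis"
begin

definition simple_graph :: "'a set \<Rightarrow> 'a set set \<Rightarrow> bool" where
  "simple_graph V E \<longleftrightarrow> finite V \<and>
     (\<forall>e\<in>E. \<exists>x y. x \<noteq> y \<and> x \<in> V \<and> y \<in> V \<and> e = {x, y})"

definition vertex_to_K4 ::
  "'a set \<Rightarrow> 'a set set \<Rightarrow> 'a set \<Rightarrow> 'a set set \<Rightarrow> bool" where
  "vertex_to_K4 V E V' E' \<longleftrightarrow>
     (\<exists>v w1 w2 w3 w4 c. v \<in> V \<and>
        distinct [w1, w2, w3, w4] \<and> {w1, w2, w3, w4} \<inter> V = {} \<and>
        (\<forall>x. {x, v} \<in> E \<longrightarrow> c x \<in> {w1, w2, w3, w4}) \<and>
        V' = (V - {v}) \<union> {w1, w2, w3, w4} \<and>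
        E' = {e \<in> E. v \<notin> e}
             \<union> {{x, c x} | x. {x, v} \<in> E}
             \<union> {{a, b} | a b. a \<in> {w1, w2, w3, w4} \<and> b \<in> {w1, w2, w3, w4} \<and> a \<noteq> b})"

definition on_cyl :: "real^3 \<Rightarrow> bool" where
  "on_cyl q \<longleftrightarrow> (q $ 1)\<^sup>2 + (q $ 2)\<^sup>2 = 1"

definition cyl_normal :: "real^3 \<Rightarrow> real^3" where
  "cyl_normal q = vector [2 * q $ 1, 2 * q $ 2, 0]"

definition framework_on_cyl :: "'a set \<Rightarrow> ('a \<Rightarrow> real^3) \<Rightarrow> bool" where
  "framework_on_cyl V p \<longleftrightarrow> (\<forall>v\<in>V. on_cyl (p v))"

definition inf_flex :: "'a set \<Rightarrow> 'a set set \<Rightarrow> ('a \<Rightarrow> real^3) \<Rightarrow> ('a \<Rightarrow> real^3) \<Rightarrow> bool" where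
  "inf_flex V E p u \<longleftrightarrow>
     (\<forall>x y. {x, y} \<in> E \<longrightarrow> (p x - p y) \<bullet> (u x - u y) = 0) \<and>
     (\<forall>x\<in>V. cyl_normal (p x) \<bullet> u x = 0)"

definition tangential_inf_isometry :: "real^3^3 \<Rightarrow> real^3 \<Rightarrow> bool" where
  "tangential_inf_isometry A b \<longleftrightarrow> transpose A = - A \<and>
     (\<forall>q. on_cyl q \<longrightarrow> cyl_normal q \<bullet> (A *v q + b) = 0)"

definition rigid_motion_flex :: "'a set \<Rightarrow> ('a \<Rightarrow> real^3) \<Rightarrow> ('a \<Rightarrow> real^3) \<Rightarrow> bool" where
  "rigid_motion_flex V p u \<longleftrightarrow>
     (\<exists>A b. tangential_inf_isometry A b \<and> (\<forall>x\<in>V. u x = A *v p x + b))"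

definition inf_rigid :: "'a set \<Rightarrow> 'a set set \<Rightarrow> ('a \<Rightarrow> real^3) \<Rightarrow> bool" where
  "inf_rigid V E p \<longleftrightarrow> (\<forall>u. inf_flex V E p u \<longrightarrow> rigid_motion_flex V p u)"

datatype 'v rpoly = Var 'v | Const rat | Add "'v rpoly" "'v rpoly" | Mul "'v rpoly" "'v rpoly"

fun rpoly_vars :: "'v rpoly \<Rightarrow> 'v set" where
  "rpoly_vars (Var x) = {x}"
| "rpoly_vars (Const c) = {}"
| "rpoly_vars (Add f g) = rpoly_vars f \<union> rpoly_vars g"
| "rpoly_vars (Mul f g) = rpoly_vars f \<union> rpoly_vars g"

fun rpoly_eval :: "'v rpoly \<Rightarrow> ('v \<Rightarrow> real) \<Rightarrow> real" where
  "rpoly_eval (Var x) env = env x"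
| "rpoly_eval (Const c) env = of_rat c"
| "rpoly_eval (Add f g) env = rpoly_eval f env + rpoly_eval g env"
| "rpoly_eval (Mul f g) env = rpoly_eval f env * rpoly_eval g env"

definition coords :: "('a \<Rightarrow> real^3) \<Rightarrow> ('a \<times> 3 \<Rightarrow> real)" where
  "coords p = (\<lambda>(v, k). p v $ k)"

text \<open>Membership of f in the ideal of Q[X_v,Y_v,Z_v : v \<in> V] generated by X_v^2+Y_v^2-1.
  Polynomial identity over Q is identity of polynomial functions on R^{3|V|}.\<close>
definition in_cyl_ideal :: "'a set \<Rightarrow> ('a \<times> 3) rpoly \<Rightarrow> bool" where
  "in_cyl_ideal V f \<longleftrightarrow>
     (\<exists>h :: 'a \<Rightarrow> ('a \<times> 3) rpoly. (\<forall>v\<in>V. rpoly_vars (h v) \<subseteq> V \<times> UNIV) \<and>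
        (\<forall>env. rpoly_eval f env =
                 (\<Sum>v\<in>V. rpoly_eval (h v) env * ((env (v, 1))\<^sup>2 + (env (v, 2))\<^sup>2 - 1))))"

definition generic_cyl :: "'a set \<Rightarrow> ('a \<Rightarrow> real^3) \<Rightarrow> bool" where
  "generic_cyl V p \<longleftrightarrow> framework_on_cyl V p \<and>
     (\<forall>f. rpoly_vars f \<subseteq> V \<times> UNIV \<longrightarrow> rpoly_eval f (coords p) = 0 \<longrightarrow> in_cyl_ideal V f)"

definition gen_inf_rigid_cyl :: "'a set \<Rightarrow> 'a set set \<Rightarrow> bool" where
  "gen_inf_rigid_cyl V E \<longleftrightarrow> (\<forall>p. generic_cyl V p \<longrightarrow> inf_rigid V E p)"

end

theory Submission
  imports Defs "Jordan_Normal_Form.Determinant"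
begin

text \<open>Generic rigidity is detected by one polynomial: the Gram determinant of a finite family of rows
  whose coefficients are polynomial in the coordinates is nonzero exactly when the rows have no common
  nonzero kernel, so a trivial kernel at a single framework on the cylinder gives one at every generic
  framework.

  Given a flex of \<open>G'\<close>, subtract the cylinder motion (rotation about the axis and translation along
  it) that pins one vertex of the new \<open>K\<^sub>4\<close>. The pinned \<open>K\<^sub>4\<close> is rigid, as checked at an explicit
  position, so the flex vanishes on it. The remaining rows of \<open>G'\<close>, with the \<open>K\<^sub>4\<close> held fixed,
  are checked at the position where the whole \<open>K\<^sub>4\<close> sits at the old place of \<open>v\<close>: there a kernel
  vector, extended by zero at \<open>v\<close>, is a flex of \<open>G\<close>, hence a cylinder motion vanishing at \<open>v\<close>,
  hence zero. That framework of \<open>G\<close> is generic, being the restriction of the generic framework of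
  \<open>G'\<close> along the injective map sending \<open>v\<close> into the \<open>K\<^sub>4\<close>.\<close>

no_notation vec_index (infixl \<open>$\<close> 100) \<comment> \<open>keep \<open>$\<close> for \<open>vec_nth\<close>, as in \<open>Defs\<close>\<close>

section \<open>Polynomial functions and generic frameworks\<close>

definition rpoly_fun :: "'v set \<Rightarrow> (('v \<Rightarrow> real) \<Rightarrow> real) \<Rightarrow> bool" where
  "rpoly_fun W F \<longleftrightarrow> (\<exists>f. rpoly_vars f \<subseteq> W \<and> (\<forall>env. rpoly_eval f env = F env))"

lemma rpoly_fun_const: "rpoly_fun W (\<lambda>_. of_rat c)"
  unfolding rpoly_fun_def by (rule exI[of _ "Const c"]) auto

lemma rpoly_fun_of_int: "rpoly_fun W (\<lambda>_. of_int k)"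
  using rpoly_fun_const[of W "of_int k"] by simp

lemma rpoly_fun_zero: "rpoly_fun W (\<lambda>_. 0)"
  using rpoly_fun_of_int[of W 0] by simp

lemma rpoly_fun_var: "x \<in> W \<Longrightarrow> rpoly_fun W (\<lambda>env. env x)"
  unfolding rpoly_fun_def by (rule exI[of _ "Var x"]) auto

lemma rpoly_fun_add: "rpoly_fun W F \<Longrightarrow> rpoly_fun W G \<Longrightarrow> rpoly_fun W (\<lambda>env. F env + G env)"
  unfolding rpoly_fun_def by (metis Un_least rpoly_eval.simps(3) rpoly_vars.simps(3))

lemma rpoly_fun_mult: "rpoly_fun W F \<Longrightarrow> rpoly_fun W G \<Longrightarrow> rpoly_fun W (\<lambda>env. F env * G env)"
  unfolding rpoly_fun_def by (metis Un_least rpoly_eval.simps(4) rpoly_vars.simps(4))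

lemma rpoly_fun_uminus: "rpoly_fun W F \<Longrightarrow> rpoly_fun W (\<lambda>env. - F env)"
  using rpoly_fun_mult[OF rpoly_fun_of_int[of W "-1"]] by simp

lemma rpoly_fun_diff: "rpoly_fun W F \<Longrightarrow> rpoly_fun W G \<Longrightarrow> rpoly_fun W (\<lambda>env. F env - G env)"
  using rpoly_fun_add[OF _ rpoly_fun_uminus] by simp

lemma rpoly_fun_if:
  "rpoly_fun W F \<Longrightarrow> rpoly_fun W G \<Longrightarrow> rpoly_fun W (\<lambda>env. if b then F env else G env)"
  by (cases b) simp_all

lemma rpoly_fun_sum:
  "finite S \<Longrightarrow> (\<And>s. s \<in> S \<Longrightarrow> rpoly_fun W (F s)) \<Longrightarrow> rpoly_fun W (\<lambda>env. \<Sum>s\<in>S. F s env)"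
  by (induction S rule: finite_induct) (auto simp: rpoly_fun_zero rpoly_fun_add)

lemma rpoly_fun_prod:
  "finite S \<Longrightarrow> (\<And>s. s \<in> S \<Longrightarrow> rpoly_fun W (F s)) \<Longrightarrow> rpoly_fun W (\<lambda>env. \<Prod>s\<in>S. F s env)"
  by (induction S rule: finite_induct) (auto simp: rpoly_fun_of_int[of W 1, simplified] rpoly_fun_mult)

lemma rpoly_fun_sum_list:
  "(\<And>s. s \<in> set xs \<Longrightarrow> rpoly_fun W (F s)) \<Longrightarrow> rpoly_fun W (\<lambda>env. \<Sum>s\<leftarrow>xs. F s env)"
  by (induction xs) (auto simp: rpoly_fun_zero rpoly_fun_add)

definition cyl_generator :: "('v \<times> 3 \<Rightarrow> real) \<Rightarrow> 'v \<Rightarrow> real" where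
  "cyl_generator env v = (env (v, 1))\<^sup>2 + (env (v, 2))\<^sup>2 - 1"

lemma in_cyl_ideal_iff:
  "in_cyl_ideal V f \<longleftrightarrow> (\<exists>h. (\<forall>v\<in>V. rpoly_vars (h v) \<subseteq> V \<times> UNIV) \<and>
     (\<forall>env. rpoly_eval f env = (\<Sum>v\<in>V. rpoly_eval (h v) env * cyl_generator env v)))"
  by (simp add: in_cyl_ideal_def cyl_generator_def)

lemma generic_cyl_rpoly_fun_nonzero:
  assumes gen: "generic_cyl V p" and F: "rpoly_fun (V \<times> UNIV) F"
    and q: "framework_on_cyl V q" and nz: "F (coords q) \<noteq> 0"
  shows "F (coords p) \<noteq> 0"
proof
  assume "F (coords p) = 0"
  obtain f where f: "rpoly_vars f \<subseteq> V \<times> UNIV" "\<And>env. rpoly_eval f env = F env"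
    using F unfolding rpoly_fun_def by blast
  have "in_cyl_ideal V f"
    using gen f \<open>F (coords p) = 0\<close> unfolding generic_cyl_def by auto
  then obtain h where h: "\<And>env. rpoly_eval f env = (\<Sum>v\<in>V. rpoly_eval (h v) env * cyl_generator env v)"
    unfolding in_cyl_ideal_iff by blast
  have "cyl_generator (coords q) v = 0" if "v \<in> V" for v
    using q that by (simp add: framework_on_cyl_def on_cyl_def coords_def cyl_generator_def)
  then have "F (coords q) = 0"
    by (simp flip: f(2) add: h)
  with nz show False ..
qed

fun rsubst :: "('v \<Rightarrow> 'w rpoly) \<Rightarrow> 'v rpoly \<Rightarrow> 'w rpoly" where
  "rsubst s (Var x) = s x"
| "rsubst s (Const c) = Const c"
| "rsubst s (Add f g) = Add (rsubst s f) (rsubst s g)"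
| "rsubst s (Mul f g) = Mul (rsubst s f) (rsubst s g)"

lemma rpoly_eval_rsubst: "rpoly_eval (rsubst s f) env = rpoly_eval f (\<lambda>x. rpoly_eval (s x) env)"
  by (induction f) auto

lemma rpoly_vars_rsubst: "rpoly_vars (rsubst s f) = (\<Union>x\<in>rpoly_vars f. rpoly_vars (s x))"
  by (induction f) auto

lemma rpoly_eval_cong:
  "(\<And>x. x \<in> rpoly_vars f \<Longrightarrow> env x = env' x) \<Longrightarrow> rpoly_eval f env = rpoly_eval f env'"
  by (induction f) auto

lemma generic_cyl_comp_inj:
  assumes gen: "generic_cyl V p" and fin: "finite V"
    and inj: "inj_on \<sigma> S" and sub: "\<sigma> ` S \<subseteq> V"
  shows "generic_cyl S (p \<circ> \<sigma>)"
  unfolding generic_cyl_def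
proof (intro conjI allI impI)
  show "framework_on_cyl S (p \<circ> \<sigma>)"
    using gen sub by (auto simp: generic_cyl_def framework_on_cyl_def)
  fix f :: "('b \<times> 3) rpoly"
  assume fS: "rpoly_vars f \<subseteq> S \<times> UNIV" and f0: "rpoly_eval f (coords (p \<circ> \<sigma>)) = 0"
  define f' where "f' = rsubst (\<lambda>(x, k). Var (\<sigma> x, k)) f"
  have eval_f': "rpoly_eval f' env = rpoly_eval f (\<lambda>(x, k). env (\<sigma> x, k))" for env
    unfolding f'_def rpoly_eval_rsubst by (simp add: case_prod_unfold)
  have "rpoly_vars f' \<subseteq> V \<times> UNIV"
    using fS sub unfolding f'_def rpoly_vars_rsubst by fastforce
  moreover have "rpoly_eval f' (coords p) = 0"
    using f0 by (simp add: eval_f' coords_def case_prod_beta)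
  ultimately have "in_cyl_ideal V f'"
    using gen unfolding generic_cyl_def by blast
  then obtain h' where h'V: "\<forall>y\<in>V. rpoly_vars (h' y) \<subseteq> V \<times> UNIV"
    and h'f': "\<And>env. rpoly_eval f' env = (\<Sum>y\<in>V. rpoly_eval (h' y) env * cyl_generator env y)"
    unfolding in_cyl_ideal_iff by blast
  \<comment> \<open>Pull back along \<open>\<sigma>\<close>, sending the vertices outside \<open>\<sigma> ` S\<close> to the point (1, 0, 0) of the cylinder.\<close>
  define \<tau> where "\<tau> z = (if fst z \<in> \<sigma> ` S then Var (the_inv_into S \<sigma> (fst z), snd z)
      else Const (if snd z = 1 then 1 else 0))" for z :: "'a \<times> 3"
  define h where "h x = rsubst \<tau> (h' (\<sigma> x))" for x
  show "in_cyl_ideal S f"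
    unfolding in_cyl_ideal_iff
  proof (intro exI[of _ h] conjI ballI allI)
    fix x assume "x \<in> S"
    show "rpoly_vars (h x) \<subseteq> S \<times> UNIV"
      unfolding h_def rpoly_vars_rsubst
      by (auto simp: \<tau>_def the_inv_into_into[OF inj] split: if_splits)
  next
    fix env :: "'b \<times> 3 \<Rightarrow> real"
    define env' where "env' z = rpoly_eval (\<tau> z) env" for z
    have env'_\<sigma>: "env' (\<sigma> x, k) = env (x, k)" if "x \<in> S" for x k
      using that by (simp add: env'_def \<tau>_def the_inv_into_f_f[OF inj])
    have outside: "cyl_generator env' y = 0" if "y \<notin> \<sigma> ` S" for y
      using that by (simp add: cyl_generator_def env'_def \<tau>_def)
    have "rpoly_eval f env = rpoly_eval f' env'"
      unfolding eval_f' using fS by (intro rpoly_eval_cong) (auto simp: env'_\<sigma>)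
    also have "\<dots> = (\<Sum>y\<in>V. rpoly_eval (h' y) env' * cyl_generator env' y)"
      by (rule h'f')
    also have "\<dots> = (\<Sum>y\<in>\<sigma> ` S. rpoly_eval (h' y) env' * cyl_generator env' y)"
      using fin sub outside by (intro sum.mono_neutral_right) auto
    also have "\<dots> = (\<Sum>x\<in>S. rpoly_eval (h x) env * cyl_generator env x)"
      by (simp add: sum.reindex[OF inj] h_def rpoly_eval_rsubst env'_def [symmetric]
          cyl_generator_def env'_\<sigma>)
    finally show "rpoly_eval f env = (\<Sum>x\<in>S. rpoly_eval (h x) env * cyl_generator env x)" .
  qed
qed

section \<open>Rows and their Gram determinant\<close>

text \<open>A row of a rigidity-type matrix is stored as a list of pairs \<open>(a, d)\<close>: vertex \<open>a\<close> carries the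
  coefficient vector \<open>d env\<close>, a function of the coordinates \<open>env\<close> of the framework.\<close>

type_synonym 'a row = "('a \<times> (('a \<times> 3 \<Rightarrow> real) \<Rightarrow> real^3)) list"

definition row_eval :: "'a row \<Rightarrow> ('a \<times> 3 \<Rightarrow> real) \<Rightarrow> ('a \<Rightarrow> real^3) \<Rightarrow> real" where
  "row_eval \<rho> env u = (\<Sum>(a, d)\<leftarrow>\<rho>. d env \<bullet> u a)"

definition row_coeff :: "'a row \<Rightarrow> ('a \<times> 3 \<Rightarrow> real) \<Rightarrow> 'a \<times> 3 \<Rightarrow> real" where
  "row_coeff \<rho> env i = (\<Sum>(a, d)\<leftarrow>\<rho>. if a = fst i then d env $ snd i else 0)"

definition row_support :: "'a row \<Rightarrow> 'a set" where
  "row_support \<rho> = fst ` set \<rho>"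

definition row_rpoly :: "'a set \<Rightarrow> 'a row \<Rightarrow> bool" where
  "row_rpoly V \<rho> \<longleftrightarrow> (\<forall>(a, d)\<in>set \<rho>. \<forall>k. rpoly_fun (V \<times> UNIV) (\<lambda>env. d env $ k))"

definition row_kernel_trivial :: "'a row set \<Rightarrow> 'a set \<Rightarrow> ('a \<times> 3 \<Rightarrow> real) \<Rightarrow> bool" where
  "row_kernel_trivial R W env \<longleftrightarrow> (\<forall>u. (\<forall>\<rho>\<in>R. row_eval \<rho> env u = 0) \<longrightarrow> (\<forall>w\<in>W. u w = 0))"

lemma sum_vertex_coords_delta:
  assumes "finite W" "a \<in> W"
  shows "(\<Sum>i\<in>W \<times> UNIV. (if a = fst i then x $ snd i else 0) * u (fst i) $ snd i) = x \<bullet> u a"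
proof -
  have "(\<Sum>i\<in>W \<times> UNIV. (if a = fst i then x $ snd i else 0) * u (fst i) $ snd i)
      = (\<Sum>w\<in>W. \<Sum>k\<in>UNIV. (if a = w then x $ k else 0) * u w $ k)"
    by (simp add: sum.cartesian_product split_def)
  also have "\<dots> = (\<Sum>w\<in>W. if a = w then (\<Sum>k\<in>UNIV. x $ k * u w $ k) else 0)"
    by (rule sum.cong) auto
  also have "\<dots> = x \<bullet> u a"
    using assms by (simp add: inner_vec_def)
  finally show ?thesis .
qed

lemma row_eval_eq_sum_coeff:
  assumes "finite W" "row_support \<rho> \<subseteq> W"
  shows "row_eval \<rho> env u = (\<Sum>i\<in>W \<times> UNIV. row_coeff \<rho> env i * u (fst i) $ snd i)"
  using assms(2)
proof (induction \<rho>)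
  case Nil
  then show ?case by (simp add: row_eval_def row_coeff_def)
next
  case (Cons ad \<rho>)
  obtain a d where ad: "ad = (a, d)" by force
  with Cons.prems have "a \<in> W" "row_support \<rho> \<subseteq> W" by (auto simp: row_support_def)
  with Cons.IH sum_vertex_coords_delta[OF assms(1) \<open>a \<in> W\<close>, of "d env" u] show ?case
    by (simp add: ad row_eval_def row_coeff_def distrib_right sum.distrib)
qed

definition flatten :: "(nat \<Rightarrow> 'a \<times> 3) \<Rightarrow> nat \<Rightarrow> ('a \<Rightarrow> real^3) \<Rightarrow> real vec" where
  "flatten e n u = vec n (\<lambda>j. u (fst (e j)) $ snd (e j))"

lemma flatten_carrier: "flatten e n u \<in> carrier_vec n"
  by (simp add: flatten_def)

context
  fixes e :: "nat \<Rightarrow> 'a \<times> 3" and n :: nat and W :: "'a set"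
  assumes e: "bij_betw e {0..<n} (W \<times> UNIV)"
begin

lemma row_eval_flatten:
  assumes "finite W" "row_support \<rho> \<subseteq> W"
  shows "row_eval \<rho> env u = (\<Sum>j\<in>{0..<n}. row_coeff \<rho> env (e j) * vec_index (flatten e n u) j)"
  unfolding row_eval_eq_sum_coeff[OF assms] sum.reindex_bij_betw[OF e, symmetric]
  by (simp add: flatten_def)

lemma flatten_eq_0_iff: "flatten e n u = 0\<^sub>v n \<longleftrightarrow> (\<forall>w\<in>W. u w = 0)"
proof
  assume u0: "flatten e n u = 0\<^sub>v n"
  show "\<forall>w\<in>W. u w = 0"
  proof (intro ballI Finite_Cartesian_Product.vec_eq_iff[THEN iffD2] allI)
    fix w k assume "w \<in> W"
    then have "(w, k) \<in> e ` {0..<n}"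
      using e by (simp add: bij_betw_def)
    then obtain j where "j < n" "e j = (w, k)"
      by auto
    then show "u w $ k = 0 $ k"
      using arg_cong[OF u0, of "\<lambda>x. vec_index x j"] by (simp add: flatten_def)
  qed
next
  assume "\<forall>w\<in>W. u w = 0"
  moreover have "fst (e j) \<in> W" if "j < n" for j
    using bij_betwE[OF e] that by force
  ultimately show "flatten e n u = 0\<^sub>v n"
    by (intro eq_vecI) (auto simp: flatten_def)
qed

lemma flatten_surj:
  assumes "x \<in> carrier_vec n"
  shows "\<exists>u. flatten e n u = x"
proof
  define u where "u w = (\<chi> k. vec_index x (the_inv_into {0..<n} e (w, k)))" for w
  show "flatten e n u = x"
    using assms e by (intro eq_vecI) (auto simp: flatten_def u_def bij_betw_def the_inv_into_f_f)
qed

end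

definition row_gram :: "'a row set \<Rightarrow> (nat \<Rightarrow> 'a \<times> 3) \<Rightarrow> nat \<Rightarrow> ('a \<times> 3 \<Rightarrow> real) \<Rightarrow> real mat" where
  "row_gram R e n env = mat n n (\<lambda>(i, j). \<Sum>\<rho>\<in>R. row_coeff \<rho> env (e i) * row_coeff \<rho> env (e j))"

lemma row_gram_carrier: "row_gram R e n env \<in> carrier_mat n n"
  by (simp add: row_gram_def)

lemma row_gram_mult_vec_index:
  assumes "i < n" "dim_vec x = n"
  shows "vec_index (row_gram R e n env *\<^sub>v x) i =
     (\<Sum>\<rho>\<in>R. row_coeff \<rho> env (e i) * (\<Sum>j\<in>{0..<n}. row_coeff \<rho> env (e j) * vec_index x j))"
proof -
  have "vec_index (row_gram R e n env *\<^sub>v x) i =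
      (\<Sum>j\<in>{0..<n}. \<Sum>\<rho>\<in>R. row_coeff \<rho> env (e i) * (row_coeff \<rho> env (e j) * vec_index x j))"
    using assms by (simp add: row_gram_def scalar_prod_def sum_distrib_right mult.assoc)
  also have "\<dots> = (\<Sum>\<rho>\<in>R. row_coeff \<rho> env (e i) * (\<Sum>j\<in>{0..<n}. row_coeff \<rho> env (e j) * vec_index x j))"
    by (subst sum.swap) (simp add: sum_distrib_left)
  finally show ?thesis .
qed

text \<open>\<open>x \<bullet> G x\<close> is the sum of the squared row values.\<close>

lemma row_gram_mult_vec_eq_0_iff:
  assumes R: "finite R" and x: "x \<in> carrier_vec n"
  shows "row_gram R e n env *\<^sub>v x = 0\<^sub>v n \<longleftrightarrow>
    (\<forall>\<rho>\<in>R. (\<Sum>j\<in>{0..<n}. row_coeff \<rho> env (e j) * vec_index x j) = 0)"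
proof -
  define Y where "Y \<rho> = (\<Sum>j\<in>{0..<n}. row_coeff \<rho> env (e j) * vec_index x j)" for \<rho>
  have G: "vec_index (row_gram R e n env *\<^sub>v x) i = (\<Sum>\<rho>\<in>R. row_coeff \<rho> env (e i) * Y \<rho>)" if "i < n" for i
    using row_gram_mult_vec_index[OF that carrier_vecD[OF x]] by (simp add: Y_def)
  have "(\<Sum>i\<in>{0..<n}. vec_index x i * vec_index (row_gram R e n env *\<^sub>v x) i)
      = (\<Sum>i\<in>{0..<n}. \<Sum>\<rho>\<in>R. Y \<rho> * (row_coeff \<rho> env (e i) * vec_index x i))"
    by (simp add: G sum_distrib_left mult_ac)
  also have "\<dots> = (\<Sum>\<rho>\<in>R. Y \<rho> * Y \<rho>)"
    by (subst sum.swap) (simp add: Y_def sum_distrib_left)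
  finally have quadratic:
    "(\<Sum>i\<in>{0..<n}. vec_index x i * vec_index (row_gram R e n env *\<^sub>v x) i) = (\<Sum>\<rho>\<in>R. Y \<rho> * Y \<rho>)" .
  show ?thesis
    unfolding Y_def [symmetric]
  proof
    assume "row_gram R e n env *\<^sub>v x = 0\<^sub>v n"
    then have "(\<Sum>\<rho>\<in>R. Y \<rho> * Y \<rho>) = 0"
      by (simp flip: quadratic)
    then show "\<forall>\<rho>\<in>R. Y \<rho> = 0"
      using sum_nonneg_eq_0_iff[OF R, of "\<lambda>\<rho>. Y \<rho> * Y \<rho>"] by simp
  next
    assume Y0: "\<forall>\<rho>\<in>R. Y \<rho> = 0"
    show "row_gram R e n env *\<^sub>v x = 0\<^sub>v n"
    proof (rule eq_vecI)
      fix i assume "i < dim_vec (0\<^sub>v n :: real vec)"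
      with G[of i] Y0 show "vec_index (row_gram R e n env *\<^sub>v x) i = vec_index (0\<^sub>v n) i"
        by simp
    qed (simp add: row_gram_def)
  qed
qed

lemma det_row_gram_nonzero_iff:
  assumes W: "finite W" and R: "finite R" and supp: "\<forall>\<rho>\<in>R. row_support \<rho> \<subseteq> W"
    and e: "bij_betw e {0..<n} (W \<times> UNIV)"
  shows "det (row_gram R e n env) \<noteq> 0 \<longleftrightarrow> row_kernel_trivial R W env"
proof -
  define annihilated where
    "annihilated x \<longleftrightarrow> (\<forall>\<rho>\<in>R. (\<Sum>j\<in>{0..<n}. row_coeff \<rho> env (e j) * vec_index x j) = 0)" for x
  have "det (row_gram R e n env) \<noteq> 0 \<longleftrightarrow> (\<forall>x\<in>carrier_vec n. annihilated x \<longrightarrow> x = 0\<^sub>v n)"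
    by (auto simp: det_0_iff_vec_prod_zero[OF row_gram_carrier] row_gram_mult_vec_eq_0_iff[OF R]
        annihilated_def)
  also have "\<dots> \<longleftrightarrow> (\<forall>u. annihilated (flatten e n u) \<longrightarrow> flatten e n u = 0\<^sub>v n)"
    using flatten_carrier flatten_surj[OF e] by blast
  also have "\<dots> \<longleftrightarrow> row_kernel_trivial R W env"
    using supp
    by (simp add: annihilated_def row_eval_flatten[OF e W] flatten_eq_0_iff[OF e] row_kernel_trivial_def)
  finally show ?thesis .
qed

lemma rpoly_fun_row_coeff: "row_rpoly V \<rho> \<Longrightarrow> rpoly_fun (V \<times> UNIV) (\<lambda>env. row_coeff \<rho> env i)"
  unfolding row_coeff_def row_rpoly_def
  by (intro rpoly_fun_sum_list) (auto intro!: rpoly_fun_if simp: rpoly_fun_zero)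

lemma rpoly_fun_det_row_gram:
  assumes R: "finite R" and "\<forall>\<rho>\<in>R. row_rpoly V \<rho>"
  shows "rpoly_fun (V \<times> UNIV) (\<lambda>env. det (row_gram R e n env))"
proof -
  have "det (row_gram R e n env) = (\<Sum>\<pi> | \<pi> permutes {0..<n}. of_int (signof \<pi>) *
      (\<Prod>i\<in>{0..<n}. \<Sum>\<rho>\<in>R. row_coeff \<rho> env (e i) * row_coeff \<rho> env (e (\<pi> i))))" for env
    unfolding det_def'[OF row_gram_carrier]
    by (intro sum.cong prod.cong refl arg_cong2[where f = "(*)"])
      (auto simp: row_gram_def permutes_in_image)
  with assms show ?thesis
    by (simp add: finite_permutations rpoly_fun_sum rpoly_fun_mult rpoly_fun_of_int rpoly_fun_prod
        rpoly_fun_row_coeff)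
qed

lemma row_kernel_trivial_generic:
  assumes gen: "generic_cyl V p" and q: "framework_on_cyl V q"
    and W: "finite W" and R: "finite R"
    and supp: "\<forall>\<rho>\<in>R. row_support \<rho> \<subseteq> W" and poly: "\<forall>\<rho>\<in>R. row_rpoly V \<rho>"
    and kernel_q: "row_kernel_trivial R W (coords q)"
  shows "row_kernel_trivial R W (coords p)"
proof -
  have "finite (W \<times> (UNIV :: 3 set))"
    using W by simp
  from ex_bij_betw_nat_finite[OF this]
  obtain e :: "nat \<Rightarrow> 'a \<times> 3" where e: "bij_betw e {0..<card (W \<times> (UNIV :: 3 set))} (W \<times> UNIV)" ..
  note det_iff = det_row_gram_nonzero_iff[OF W R supp e]
  have "det (row_gram R e (card (W \<times> (UNIV :: 3 set))) (coords q)) \<noteq> 0"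
    using kernel_q det_iff by blast
  then have "det (row_gram R e (card (W \<times> (UNIV :: 3 set))) (coords p)) \<noteq> 0"
    by (rule generic_cyl_rpoly_fun_nonzero[OF gen rpoly_fun_det_row_gram[OF R poly] q])
  then show ?thesis
    using det_iff by blast
qed

section \<open>Infinitesimal motions of the cylinder\<close>

text \<open>Angular velocity \<open>\<alpha>\<close> about the axis of the cylinder and speed \<open>t\<close> along it.\<close>

definition cyl_motion :: "real \<Rightarrow> real \<Rightarrow> real^3 \<Rightarrow> real^3" where
  "cyl_motion \<alpha> t y = vector [- \<alpha> * y $ 2, \<alpha> * y $ 1, t]"

lemma cyl_motion_edge: "(x - y) \<bullet> (cyl_motion \<alpha> t x - cyl_motion \<alpha> t y) = 0"
  by (simp add: cyl_motion_def inner_vec_def sum_3 algebra_simps)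

lemma cyl_motion_tangent: "cyl_normal x \<bullet> cyl_motion \<alpha> t x = 0"
  by (simp add: cyl_motion_def cyl_normal_def inner_vec_def sum_3 algebra_simps)

lemma cyl_motion_eq_0_iff:
  assumes "on_cyl q"
  shows "cyl_motion \<alpha> t q = 0 \<longleftrightarrow> \<alpha> = 0 \<and> t = 0"
proof
  assume "cyl_motion \<alpha> t q = 0"
  then have h1: "\<alpha> * q $ 1 = 0" and h2: "\<alpha> * q $ 2 = 0" and "t = 0"
    by (simp_all add: cyl_motion_def Finite_Cartesian_Product.vec_eq_iff forall_3)
  have "\<alpha> = \<alpha> * ((q $ 1)\<^sup>2 + (q $ 2)\<^sup>2)"
    using assms by (simp add: on_cyl_def)
  also have "\<dots> = (\<alpha> * q $ 1) * q $ 1 + (\<alpha> * q $ 2) * q $ 2"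
    by (simp add: power2_eq_square algebra_simps)
  finally show "\<alpha> = 0 \<and> t = 0"
    unfolding h1 h2 using \<open>t = 0\<close> by simp
qed (simp add: cyl_motion_def Finite_Cartesian_Product.vec_eq_iff forall_3)

lemma tangential_inf_isometry_cyl_motion:
  "\<exists>A b. tangential_inf_isometry A b \<and> (\<forall>y. A *v y + b = cyl_motion \<alpha> t y)"
proof (intro exI conjI allI)
  let ?A = "vector [vector [0, - \<alpha>, 0], vector [\<alpha>, 0, 0], vector [0, 0, 0]] :: real^3^3"
  let ?b = "vector [0, 0, t] :: real^3"
  show motion: "?A *v y + ?b = cyl_motion \<alpha> t y" for y
    by (simp add: cyl_motion_def matrix_vector_mult_def sum_3 Finite_Cartesian_Product.vec_eq_iff forall_3)
  show "tangential_inf_isometry ?A ?b"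
    unfolding tangential_inf_isometry_def motion
    by (simp add: cyl_motion_tangent transpose_def Finite_Cartesian_Product.vec_eq_iff forall_3)
qed

lemma tangential_inf_isometry_imp_cyl_motion:
  assumes "tangential_inf_isometry A b"
  shows "\<exists>\<alpha> t. \<forall>y. A *v y + b = cyl_motion \<alpha> t y"
proof -
  have skew_sym: "transpose A = - A"
    and tangent: "\<And>q. on_cyl q \<Longrightarrow> cyl_normal q \<bullet> (A *v q + b) = 0"
    using assms by (auto simp: tangential_inf_isometry_def)
  have skew: "A $ i $ j = - A $ j $ i" for i j
    using arg_cong[OF skew_sym, of "\<lambda>M. M $ j $ i"] by (simp add: transpose_def)
  have diag: "A $ i $ i = 0" for i
    using skew[of i i] by simp
  have line1: "A $ 1 $ 3 * z + b $ 1 = 0" for z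
    using tangent[of "vector [1, 0, z]"]
    by (simp add: on_cyl_def cyl_normal_def inner_vec_def sum_3 matrix_vector_mult_def diag)
  have line2: "A $ 2 $ 3 * z + b $ 2 = 0" for z
    using tangent[of "vector [0, 1, z]"]
    by (simp add: on_cyl_def cyl_normal_def inner_vec_def sum_3 matrix_vector_mult_def diag)
  have "b $ 1 = 0" "A $ 1 $ 3 = 0" "b $ 2 = 0" "A $ 2 $ 3 = 0"
    using line1[of 0] line1[of 1] line2[of 0] line2[of 1] by auto
  moreover have "A $ 3 $ 1 = 0" "A $ 3 $ 2 = 0" "A $ 1 $ 2 = - A $ 2 $ 1"
    using skew[of 3 1] skew[of 3 2] skew[of 1 2] calculation by auto
  ultimately have "A *v y + b = cyl_motion (A $ 2 $ 1) (b $ 3) y" for y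
    by (simp add: cyl_motion_def matrix_vector_mult_def sum_3 Finite_Cartesian_Product.vec_eq_iff
        forall_3 diag)
  then show ?thesis
    by blast
qed

lemma rigid_motion_flex_iff:
  "rigid_motion_flex V p u \<longleftrightarrow> (\<exists>\<alpha> t. \<forall>x\<in>V. u x = cyl_motion \<alpha> t (p x))"
proof
  assume "rigid_motion_flex V p u"
  then obtain A b where "tangential_inf_isometry A b" "\<forall>x\<in>V. u x = A *v p x + b"
    unfolding rigid_motion_flex_def by blast
  with tangential_inf_isometry_imp_cyl_motion show "\<exists>\<alpha> t. \<forall>x\<in>V. u x = cyl_motion \<alpha> t (p x)"
    by metis
next
  assume "\<exists>\<alpha> t. \<forall>x\<in>V. u x = cyl_motion \<alpha> t (p x)"
  with tangential_inf_isometry_cyl_motion show "rigid_motion_flex V p u"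
    unfolding rigid_motion_flex_def by metis
qed

lemma inf_flex_diff_cyl_motion:
  assumes "inf_flex V E p u"
  shows "inf_flex V E p (\<lambda>x. u x - cyl_motion \<alpha> t (p x))"
  unfolding inf_flex_def
proof (intro conjI allI impI ballI)
  fix x y assume "{x, y} \<in> E"
  then have "(p x - p y) \<bullet> (u x - u y) = 0"
    using assms by (simp add: inf_flex_def)
  moreover have "(u x - cyl_motion \<alpha> t (p x)) - (u y - cyl_motion \<alpha> t (p y))
      = (u x - u y) - (cyl_motion \<alpha> t (p x) - cyl_motion \<alpha> t (p y))"
    by simp
  ultimately show "(p x - p y) \<bullet> ((u x - cyl_motion \<alpha> t (p x)) - (u y - cyl_motion \<alpha> t (p y))) = 0"
    by (simp only: inner_diff_right[of "p x - p y" "u x - u y"] cyl_motion_edge diff_zero)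
next
  fix x assume "x \<in> V"
  then show "cyl_normal (p x) \<bullet> (u x - cyl_motion \<alpha> t (p x)) = 0"
    using assms by (simp add: inf_flex_def inner_diff_right cyl_motion_tangent)
qed

lemma cyl_motion_normalizes:
  assumes "on_cyl q"
  obtains \<alpha> t where "(d - cyl_motion \<alpha> t q) $ 3 = 0"
    and "- q $ 2 * (d - cyl_motion \<alpha> t q) $ 1 + q $ 1 * (d - cyl_motion \<alpha> t q) $ 2 = 0"
proof
  let ?\<alpha> = "- q $ 2 * d $ 1 + q $ 1 * d $ 2"
  have "- q $ 2 * (d - cyl_motion ?\<alpha> (d $ 3) q) $ 1 + q $ 1 * (d - cyl_motion ?\<alpha> (d $ 3) q) $ 2
      = ?\<alpha> * (1 - ((q $ 1)\<^sup>2 + (q $ 2)\<^sup>2))"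
    by (simp add: cyl_motion_def power2_eq_square algebra_simps)
  with assms show "- q $ 2 * (d - cyl_motion ?\<alpha> (d $ 3) q) $ 1 + q $ 1 * (d - cyl_motion ?\<alpha> (d $ 3) q) $ 2 = 0"
    by (simp add: on_cyl_def)
qed (simp add: cyl_motion_def)

section \<open>Rows of the rigidity matrix\<close>

definition env_point :: "('a \<times> 3 \<Rightarrow> real) \<Rightarrow> 'a \<Rightarrow> real^3" where
  "env_point env a = (\<chi> k. env (a, k))"

lemma env_point_nth [simp]: "env_point env a $ k = env (a, k)"
  by (simp add: env_point_def)

lemma env_point_coords [simp]: "env_point (coords p) a = p a"
  by (simp add: env_point_def coords_def Finite_Cartesian_Product.vec_eq_iff)

definition edge_row :: "'a \<Rightarrow> 'a \<Rightarrow> 'a row" where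
  "edge_row a b = [(a, \<lambda>env. env_point env a - env_point env b), (b, \<lambda>env. env_point env b - env_point env a)]"

definition normal_row :: "'a \<Rightarrow> 'a row" where
  "normal_row a = [(a, \<lambda>env. cyl_normal (env_point env a))]"

definition edge_row_fixed_end :: "'a \<Rightarrow> 'a \<Rightarrow> 'a row" where
  "edge_row_fixed_end a b = [(a, \<lambda>env. env_point env a - env_point env b)]"

definition height_pin_row :: "'a \<Rightarrow> 'a row" where
  "height_pin_row a = [(a, \<lambda>_. vector [0, 0, 1])]"

definition rotation_pin_row :: "'a \<Rightarrow> 'a row" where
  "rotation_pin_row a = [(a, \<lambda>env. vector [- env (a, 2), env (a, 1), 0])]"

lemma row_eval_edge_row: "row_eval (edge_row a b) (coords p) u = (p a - p b) \<bullet> (u a - u b)"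
  by (simp add: row_eval_def edge_row_def inner_diff_left inner_diff_right algebra_simps)

lemma row_eval_normal_row: "row_eval (normal_row a) (coords p) u = cyl_normal (p a) \<bullet> u a"
  by (simp add: row_eval_def normal_row_def)

lemma row_eval_edge_row_fixed_end:
  "row_eval (edge_row_fixed_end a b) (coords p) u = (p a - p b) \<bullet> u a"
  by (simp add: row_eval_def edge_row_fixed_end_def)

lemma row_eval_height_pin_row: "row_eval (height_pin_row a) env u = u a $ 3"
  by (simp add: row_eval_def height_pin_row_def inner_vec_def sum_3)

lemma row_eval_rotation_pin_row:
  "row_eval (rotation_pin_row a) (coords p) u = - p a $ 2 * u a $ 1 + p a $ 1 * u a $ 2"
  by (simp add: row_eval_def rotation_pin_row_def inner_vec_def sum_3 coords_def)

lemma rpoly_fun_vector3: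
  assumes "rpoly_fun W f1" "rpoly_fun W f2" "rpoly_fun W f3"
  shows "rpoly_fun W (\<lambda>env. (vector [f1 env, f2 env, f3 env] :: real^3) $ k)"
  using exhaust_3[of k] assms by auto

lemma row_rpoly_edge_row: "a \<in> V \<Longrightarrow> b \<in> V \<Longrightarrow> row_rpoly V (edge_row a b)"
  by (simp add: row_rpoly_def edge_row_def rpoly_fun_diff rpoly_fun_var)

lemma row_rpoly_edge_row_fixed_end: "a \<in> V \<Longrightarrow> b \<in> V \<Longrightarrow> row_rpoly V (edge_row_fixed_end a b)"
  by (simp add: row_rpoly_def edge_row_fixed_end_def rpoly_fun_diff rpoly_fun_var)

lemma row_rpoly_normal_row: "a \<in> V \<Longrightarrow> row_rpoly V (normal_row a)"
  unfolding row_rpoly_def normal_row_def cyl_normal_def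
  by (simp del: vector_3 add: rpoly_fun_vector3 rpoly_fun_mult rpoly_fun_var rpoly_fun_zero
      rpoly_fun_of_int[of _ 2, simplified])

lemma row_rpoly_height_pin_row: "row_rpoly V (height_pin_row a)"
  unfolding row_rpoly_def height_pin_row_def
  by (simp del: vector_3 add: rpoly_fun_vector3 rpoly_fun_zero rpoly_fun_of_int[of _ 1, simplified])

lemma row_rpoly_rotation_pin_row: "a \<in> V \<Longrightarrow> row_rpoly V (rotation_pin_row a)"
  unfolding row_rpoly_def rotation_pin_row_def
  by (simp del: vector_3 add: rpoly_fun_vector3 rpoly_fun_zero rpoly_fun_uminus rpoly_fun_var)

text \<open>The two pins at \<open>w\<close> remove the cylinder motions.\<close>

definition pinned_clique_rows :: "'a \<Rightarrow> 'a set \<Rightarrow> 'a row set" where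
  "pinned_clique_rows w K = {edge_row a b | a b. a \<in> K \<and> b \<in> K \<and> a \<noteq> b} \<union> normal_row ` K
     \<union> {height_pin_row w, rotation_pin_row w}"

lemma finite_pinned_clique_rows: "finite K \<Longrightarrow> finite (pinned_clique_rows w K)"
proof -
  assume "finite K"
  moreover have "{edge_row a b | a b. a \<in> K \<and> b \<in> K \<and> a \<noteq> b} \<subseteq> (\<lambda>(a, b). edge_row a b) ` (K \<times> K)"
    by auto
  ultimately show ?thesis
    unfolding pinned_clique_rows_def by (simp add: finite_subset)
qed

lemma row_support_pinned_clique_rows:
  "w \<in> K \<Longrightarrow> \<rho> \<in> pinned_clique_rows w K \<Longrightarrow> row_support \<rho> \<subseteq> K"
  unfolding pinned_clique_rows_def
  by (auto simp: row_support_def edge_row_def normal_row_def height_pin_row_def rotation_pin_row_def)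

lemma row_rpoly_pinned_clique_rows:
  "K \<subseteq> V \<Longrightarrow> w \<in> K \<Longrightarrow> \<rho> \<in> pinned_clique_rows w K \<Longrightarrow> row_rpoly V \<rho>"
  unfolding pinned_clique_rows_def
  by (auto intro: row_rpoly_edge_row row_rpoly_normal_row row_rpoly_height_pin_row
      row_rpoly_rotation_pin_row)

lemma pinned_clique_rows_vanish:
  assumes "inf_flex V E p u" "K \<subseteq> V" "{{a, b} | a b. a \<in> K \<and> b \<in> K \<and> a \<noteq> b} \<subseteq> E"
    and "u w $ 3 = 0" "- p w $ 2 * u w $ 1 + p w $ 1 * u w $ 2 = 0"
  shows "\<forall>\<rho>\<in>pinned_clique_rows w K. row_eval \<rho> (coords p) u = 0"
  using assms unfolding pinned_clique_rows_def inf_flex_def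
  by (auto simp: row_eval_edge_row row_eval_normal_row row_eval_height_pin_row
      row_eval_rotation_pin_row subset_iff) blast

lemma K4_pinned_kernel_trivial_special:
  assumes distinct: "distinct [w1, w2, w3, w4]"
    and q: "q w1 = vector [1, 0, 0]" "q w2 = vector [0, 1, 0]"
      "q w3 = vector [-1, 0, 1]" "q w4 = vector [0, -1, 2]"
  shows "row_kernel_trivial (pinned_clique_rows w1 {w1, w2, w3, w4}) {w1, w2, w3, w4} (coords q)"
  unfolding row_kernel_trivial_def
proof (intro allI impI)
  fix u :: "'a \<Rightarrow> real^3"
  let ?K = "{w1, w2, w3, w4}"
  assume rows: "\<forall>\<rho>\<in>pinned_clique_rows w1 ?K. row_eval \<rho> (coords q) u = 0"
  have edge: "(q a - q b) \<bullet> (u a - u b) = 0" if "a \<in> ?K" "b \<in> ?K" "a \<noteq> b" for a b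
  proof -
    have "edge_row a b \<in> pinned_clique_rows w1 ?K"
      using that unfolding pinned_clique_rows_def by blast
    with rows have "row_eval (edge_row a b) (coords q) u = 0"
      by blast
    then show ?thesis
      by (simp add: row_eval_edge_row)
  qed
  have normal: "cyl_normal (q a) \<bullet> u a = 0" if "a \<in> ?K" for a
  proof -
    have "normal_row a \<in> pinned_clique_rows w1 ?K"
      using that unfolding pinned_clique_rows_def by blast
    with rows have "row_eval (normal_row a) (coords q) u = 0"
      by blast
    then show ?thesis
      by (simp add: row_eval_normal_row)
  qed
  have pins: "u w1 $ 3 = 0" "- q w1 $ 2 * u w1 $ 1 + q w1 $ 1 * u w1 $ 2 = 0"
    using rows unfolding pinned_clique_rows_def
    by (auto simp: row_eval_height_pin_row row_eval_rotation_pin_row)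
  have "w1 \<noteq> w2" "w1 \<noteq> w3" "w1 \<noteq> w4" "w2 \<noteq> w3" "w2 \<noteq> w4" "w3 \<noteq> w4"
    using distinct by auto
  note expand = inner_vec_def sum_3 cyl_normal_def q
  have n: "u w1 $ 1 = 0" "u w2 $ 2 = 0" "u w3 $ 1 = 0" "u w4 $ 2 = 0"
    using normal[of w1] normal[of w2] normal[of w3] normal[of w4] by (simp_all add: expand)
  have p: "u w1 $ 2 = 0" "u w1 $ 3 = 0"
    using pins by (simp_all add: q)
  have e12: "u w1 $ 1 - u w2 $ 1 - (u w1 $ 2 - u w2 $ 2) = 0"
    using edge[of w1 w2] \<open>w1 \<noteq> w2\<close> by (simp add: expand)
  have e13: "2 * (u w1 $ 1 - u w3 $ 1) - (u w1 $ 3 - u w3 $ 3) = 0"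
    using edge[of w1 w3] \<open>w1 \<noteq> w3\<close> by (simp add: expand algebra_simps)
  have e14: "u w1 $ 1 - u w4 $ 1 + (u w1 $ 2 - u w4 $ 2) - 2 * (u w1 $ 3 - u w4 $ 3) = 0"
    using edge[of w1 w4] \<open>w1 \<noteq> w4\<close> by (simp add: expand algebra_simps)
  have e23: "u w2 $ 1 - u w3 $ 1 + (u w2 $ 2 - u w3 $ 2) - (u w2 $ 3 - u w3 $ 3) = 0"
    using edge[of w2 w3] \<open>w2 \<noteq> w3\<close> by (simp add: expand algebra_simps)
  have e24: "2 * (u w2 $ 2 - u w4 $ 2) - 2 * (u w2 $ 3 - u w4 $ 3) = 0"
    using edge[of w2 w4] \<open>w2 \<noteq> w4\<close> by (simp add: expand algebra_simps)
  have e34: "- (u w3 $ 1 - u w4 $ 1) + (u w3 $ 2 - u w4 $ 2) - (u w3 $ 3 - u w4 $ 3) = 0"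
    using edge[of w3 w4] \<open>w3 \<noteq> w4\<close> by (simp add: expand algebra_simps)
  note e = e12 e13 e14 e23 e24 e34
  have "u w2 $ 1 = 0" "u w3 $ 3 = 0" "u w4 $ 3 = 0"
    using n p e by argo+
  moreover from this have "u w2 $ 3 = 0" "u w4 $ 1 = 0"
    using n p e by argo+
  moreover from calculation have "u w3 $ 2 = 0"
    using n p e by argo
  ultimately have "\<forall>k. u w $ k = 0" if "w \<in> ?K" for w
    using n p that by (auto simp: forall_3)
  then show "\<forall>w\<in>?K. u w = 0"
    by (simp add: Finite_Cartesian_Product.vec_eq_iff)
qed

lemma K4_pinned_kernel_trivial:
  assumes distinct: "distinct [w1, w2, w3, w4]" and "{w1, w2, w3, w4} \<subseteq> V" and gen: "generic_cyl V p"
  shows "row_kernel_trivial (pinned_clique_rows w1 {w1, w2, w3, w4}) {w1, w2, w3, w4} (coords p)"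
proof -
  let ?K = "{w1, w2, w3, w4}"
  \<comment> \<open>An explicit position of the \<open>K\<^sub>4\<close> on the cylinder where the pinned rows are independent.\<close>
  define q :: "'a \<Rightarrow> real^3" where "q x =
      (if x = w2 then vector [0, 1, 0] else if x = w3 then vector [-1, 0, 1]
       else if x = w4 then vector [0, -1, 2] else vector [1, 0, 0])" for x
  have "framework_on_cyl V q"
    by (simp add: framework_on_cyl_def on_cyl_def q_def)
  moreover have "w1 \<noteq> w2" "w1 \<noteq> w3" "w1 \<noteq> w4" "w2 \<noteq> w3" "w2 \<noteq> w4" "w3 \<noteq> w4"
    using distinct by auto
  then have "row_kernel_trivial (pinned_clique_rows w1 ?K) ?K (coords q)"
    by (intro K4_pinned_kernel_trivial_special[OF distinct]) (simp_all add: q_def)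
  moreover have "\<forall>\<rho>\<in>pinned_clique_rows w1 ?K. row_support \<rho> \<subseteq> ?K"
    using row_support_pinned_clique_rows[of w1 ?K] by blast
  moreover have "\<forall>\<rho>\<in>pinned_clique_rows w1 ?K. row_rpoly V \<rho>"
    using row_rpoly_pinned_clique_rows[of ?K V w1] assms(2) by blast
  ultimately show ?thesis
    using row_kernel_trivial_generic[OF gen, of q ?K "pinned_clique_rows w1 ?K"]
    by (simp add: finite_pinned_clique_rows)
qed

section \<open>The vertex-to-\<open>K\<^sub>4\<close> move\<close>

locale vertex_to_K4_move =
  fixes V V' :: "'a set" and E E' :: "'a set set" and v w1 w2 w3 w4 :: 'a and c :: "'a \<Rightarrow> 'a"
  assumes simple: "simple_graph V E"
    and v_in_V: "v \<in> V"
    and distinct: "distinct [w1, w2, w3, w4]"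
    and fresh: "{w1, w2, w3, w4} \<inter> V = {}"
    and c_in_K: "\<And>x. {x, v} \<in> E \<Longrightarrow> c x \<in> {w1, w2, w3, w4}"
    and V'_eq: "V' = (V - {v}) \<union> {w1, w2, w3, w4}"
    and E'_eq: "E' = {e \<in> E. v \<notin> e} \<union> {{x, c x} | x. {x, v} \<in> E}
      \<union> {{a, b} | a b. a \<in> {w1, w2, w3, w4} \<and> b \<in> {w1, w2, w3, w4} \<and> a \<noteq> b}"
begin

abbreviation K :: "'a set" where
  "K \<equiv> {w1, w2, w3, w4}"

lemma finite_V: "finite V"
  using simple by (simp add: simple_graph_def)

lemma finite_V': "finite V'"
  using finite_V by (simp add: V'_eq)

lemma edge_endpoints: "{x, y} \<in> E \<Longrightarrow> x \<noteq> y \<and> x \<in> V \<and> y \<in> V"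
  using simple unfolding simple_graph_def by (fastforce simp: doubleton_eq_iff)

lemma K_notin_V: "x \<in> K \<Longrightarrow> x \<notin> V"
  using fresh by auto

text \<open>The rows of the rigidity matrix of \<open>G'\<close> outside the \<open>K\<^sub>4\<close>, with the velocities on the \<open>K\<^sub>4\<close> set to zero.\<close>

definition outer_rows :: "'a row set" where
  "outer_rows = {edge_row x y | x y. {x, y} \<in> E \<and> x \<noteq> v \<and> y \<noteq> v} \<union> normal_row ` (V - {v})
     \<union> {edge_row_fixed_end x (c x) | x. {x, v} \<in> E}"

lemma finite_outer_rows: "finite outer_rows"
proof -
  have "{edge_row x y | x y. {x, y} \<in> E \<and> x \<noteq> v \<and> y \<noteq> v} \<subseteq> (\<lambda>(a, b). edge_row a b) ` (V \<times> V)"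
    using edge_endpoints by fastforce
  moreover have "{edge_row_fixed_end x (c x) | x. {x, v} \<in> E} \<subseteq> (\<lambda>x. edge_row_fixed_end x (c x)) ` V"
    using edge_endpoints by fastforce
  ultimately show ?thesis
    unfolding outer_rows_def using finite_V by (simp add: finite_subset[OF _ finite_imageI])
qed

lemma row_support_outer_rows: "\<rho> \<in> outer_rows \<Longrightarrow> row_support \<rho> \<subseteq> V - {v}"
  unfolding outer_rows_def using edge_endpoints
  by (fastforce simp: row_support_def edge_row_def normal_row_def edge_row_fixed_end_def)

lemma row_rpoly_outer_rows: "\<rho> \<in> outer_rows \<Longrightarrow> row_rpoly V' \<rho>"
  unfolding outer_rows_def using edge_endpoints c_in_K
  by (auto simp: V'_eq intro!: row_rpoly_edge_row row_rpoly_normal_row row_rpoly_edge_row_fixed_end)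

definition K_at_v :: "('a \<Rightarrow> real^3) \<Rightarrow> 'a \<Rightarrow> real^3" where
  "K_at_v p x = (if x \<in> K then p v else p x)"

lemma K_at_v_eq: "x \<in> V \<Longrightarrow> K_at_v p x = p x"
  using K_notin_V by (auto simp: K_at_v_def)

lemma outer_rows_vanish_imp_inf_flex:
  assumes rows: "\<forall>\<rho>\<in>outer_rows. row_eval \<rho> (coords (K_at_v p)) u = 0"
  shows "inf_flex V E p (u(v := 0))"
  unfolding inf_flex_def
proof (intro conjI allI impI ballI)
  have to_v: "(p x - p v) \<bullet> u x = 0" if "{x, v} \<in> E" for x
  proof -
    have "edge_row_fixed_end x (c x) \<in> outer_rows"
      using that unfolding outer_rows_def by blast
    with rows have "row_eval (edge_row_fixed_end x (c x)) (coords (K_at_v p)) u = 0"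
      by blast
    moreover have "K_at_v p (c x) = p v" "K_at_v p x = p x"
      using c_in_K[OF that] K_at_v_eq edge_endpoints[OF that] by (auto simp: K_at_v_def)
    ultimately show ?thesis
      by (simp add: row_eval_edge_row_fixed_end)
  qed
  fix x y assume xy: "{x, y} \<in> E"
  consider "x = v" | "y = v" | "x \<noteq> v" "y \<noteq> v"
    by blast
  then show "(p x - p y) \<bullet> ((u(v := 0)) x - (u(v := 0)) y) = 0"
  proof cases
    case 1
    with xy have "{y, v} \<in> E"
      by (simp add: insert_commute)
    then have "(p y - p v) \<bullet> u y = 0" "y \<noteq> v"
      using to_v edge_endpoints by auto
    moreover have "(p v - p y) \<bullet> (0 - u y) = (p y - p v) \<bullet> u y"
      by (simp add: inner_diff_left)
    ultimately show ?thesis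
      using 1 by simp
  next
    case 2
    with xy edge_endpoints[OF xy] to_v[of x] show ?thesis
      by simp
  next
    case 3
    with xy have "edge_row x y \<in> outer_rows"
      unfolding outer_rows_def by blast
    with rows have "row_eval (edge_row x y) (coords (K_at_v p)) u = 0"
      by blast
    with 3 edge_endpoints[OF xy] K_at_v_eq show ?thesis
      by (simp add: row_eval_edge_row)
  qed
next
  fix x assume "x \<in> V"
  show "cyl_normal (p x) \<bullet> (u(v := 0)) x = 0"
  proof (cases "x = v")
    case False
    with \<open>x \<in> V\<close> have "normal_row x \<in> outer_rows"
      unfolding outer_rows_def by blast
    with rows have "row_eval (normal_row x) (coords (K_at_v p)) u = 0"
      by blast
    with False \<open>x \<in> V\<close> show ?thesis
      by (simp add: row_eval_normal_row K_at_v_eq)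
  qed simp
qed

lemma outer_rows_kernel_trivial_K_at_v:
  assumes "framework_on_cyl V p" "inf_rigid V E p"
  shows "row_kernel_trivial outer_rows (V - {v}) (coords (K_at_v p))"
  unfolding row_kernel_trivial_def
proof (intro allI impI)
  fix u assume "\<forall>\<rho>\<in>outer_rows. row_eval \<rho> (coords (K_at_v p)) u = 0"
  then have "rigid_motion_flex V p (u(v := 0))"
    using assms(2) outer_rows_vanish_imp_inf_flex by (simp add: inf_rigid_def)
  then obtain \<alpha> t where motion: "\<forall>x\<in>V. (u(v := 0)) x = cyl_motion \<alpha> t (p x)"
    unfolding rigid_motion_flex_iff by blast
  then have "cyl_motion \<alpha> t (p v) = 0"
    using v_in_V by force
  then have "\<alpha> = 0" and "t = 0"
    using cyl_motion_eq_0_iff assms(1) v_in_V by (auto simp: framework_on_cyl_def)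
  show "\<forall>w\<in>V - {v}. u w = 0"
  proof
    fix w assume "w \<in> V - {v}"
    then have "u w = cyl_motion \<alpha> t (p w)"
      using bspec[OF motion, of w] by simp
    with \<open>\<alpha> = 0\<close> \<open>t = 0\<close> show "u w = 0"
      by (simp add: cyl_motion_def Finite_Cartesian_Product.vec_eq_iff forall_3)
  qed
qed

lemma generic_cyl_contract_K:
  assumes "generic_cyl V' p'"
  shows "generic_cyl V (p' \<circ> (\<lambda>x. if x = v then w1 else x))"
proof (rule generic_cyl_comp_inj[OF assms finite_V'])
  show "inj_on (\<lambda>x. if x = v then w1 else x) V"
    using K_notin_V by (auto simp: inj_on_def)
  show "(\<lambda>x. if x = v then w1 else x) ` V \<subseteq> V'"
    by (auto simp: V'_eq)
qed

lemma outer_rows_kernel_trivial: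
  assumes rigid: "gen_inf_rigid_cyl V E" and gen: "generic_cyl V' p'"
  shows "row_kernel_trivial outer_rows (V - {v}) (coords p')"
proof -
  define p where "p = p' \<circ> (\<lambda>x. if x = v then w1 else x)"
  have "generic_cyl V p"
    unfolding p_def using gen by (rule generic_cyl_contract_K)
  then have on_cyl_p: "framework_on_cyl V p" and "inf_rigid V E p"
    using rigid by (auto simp: generic_cyl_def gen_inf_rigid_cyl_def)
  then have "row_kernel_trivial outer_rows (V - {v}) (coords (K_at_v p))"
    by (rule outer_rows_kernel_trivial_K_at_v)
  moreover have "framework_on_cyl V' (K_at_v p)"
    using on_cyl_p v_in_V by (auto simp: framework_on_cyl_def K_at_v_def V'_eq)
  ultimately show ?thesis
    using row_kernel_trivial_generic[OF gen _ _ finite_outer_rows] finite_V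
      row_support_outer_rows row_rpoly_outer_rows
    by blast
qed

lemma outer_rows_vanish:
  assumes flex: "inf_flex V' E' p' u" and K0: "\<forall>w\<in>K. u w = 0"
  shows "\<forall>\<rho>\<in>outer_rows. row_eval \<rho> (coords p') u = 0"
proof
  fix \<rho> assume "\<rho> \<in> outer_rows"
  then consider (edge) x y where "\<rho> = edge_row x y" "{x, y} \<in> E" "x \<noteq> v" "y \<noteq> v"
    | (normal) x where "\<rho> = normal_row x" "x \<in> V - {v}"
    | (fixed_end) x where "\<rho> = edge_row_fixed_end x (c x)" "{x, v} \<in> E"
    unfolding outer_rows_def by blast
  then show "row_eval \<rho> (coords p') u = 0"
  proof cases
    case edge
    then have "{x, y} \<in> E'"
      by (simp add: E'_eq)
    with edge flex show ?thesis
      by (simp add: row_eval_edge_row inf_flex_def)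
  next
    case normal
    with flex show ?thesis
      by (simp add: row_eval_normal_row inf_flex_def V'_eq)
  next
    case fixed_end
    then have "{x, c x} \<in> E'"
      by (auto simp: E'_eq)
    with flex have "(p' x - p' (c x)) \<bullet> (u x - u (c x)) = 0"
      unfolding inf_flex_def by blast
    moreover have "u (c x) = 0"
      using K0 c_in_K[OF fixed_end(2)] by blast
    ultimately show ?thesis
      using fixed_end by (simp add: row_eval_edge_row_fixed_end)
  qed
qed

lemma inf_rigid_if_kernels_trivial:
  assumes on_cyl: "framework_on_cyl V' p'"
    and K4_kernel: "row_kernel_trivial (pinned_clique_rows w1 K) K (coords p')"
    and outer_kernel: "row_kernel_trivial outer_rows (V - {v}) (coords p')"
  shows "inf_rigid V' E' p'"
  unfolding inf_rigid_def
proof (intro allI impI)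
  fix u assume flex: "inf_flex V' E' p' u"
  have "K \<subseteq> V'"
    by (auto simp: V'_eq)
  with on_cyl have "on_cyl (p' w1)"
    by (auto simp: framework_on_cyl_def)
  then obtain \<alpha> t where pins: "(u w1 - cyl_motion \<alpha> t (p' w1)) $ 3 = 0"
    "- p' w1 $ 2 * (u w1 - cyl_motion \<alpha> t (p' w1)) $ 1 + p' w1 $ 1 * (u w1 - cyl_motion \<alpha> t (p' w1)) $ 2 = 0"
    by (rule cyl_motion_normalizes)
  define u' where "u' x = u x - cyl_motion \<alpha> t (p' x)" for x
  have flex': "inf_flex V' E' p' u'"
    unfolding u'_def using flex by (rule inf_flex_diff_cyl_motion)
  have pins': "u' w1 $ 3 = 0" "- p' w1 $ 2 * u' w1 $ 1 + p' w1 $ 1 * u' w1 $ 2 = 0"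
    using pins unfolding u'_def .
  have clique: "{{a, b} | a b. a \<in> K \<and> b \<in> K \<and> a \<noteq> b} \<subseteq> E'"
    unfolding E'_eq by (rule Un_upper2)
  from flex' \<open>K \<subseteq> V'\<close> clique pins' have "\<forall>\<rho>\<in>pinned_clique_rows w1 K. row_eval \<rho> (coords p') u' = 0"
    by (rule pinned_clique_rows_vanish)
  with K4_kernel have K0: "\<forall>w\<in>K. u' w = 0"
    unfolding row_kernel_trivial_def by blast
  with outer_kernel outer_rows_vanish[OF flex' K0] have "\<forall>w\<in>V - {v}. u' w = 0"
    unfolding row_kernel_trivial_def by blast
  with K0 have "\<forall>x\<in>V'. u x = cyl_motion \<alpha> t (p' x)"
    by (auto simp: V'_eq u'_def)
  then show "rigid_motion_flex V' p' u"
    unfolding rigid_motion_flex_iff by blast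
qed

theorem gen_inf_rigid_cyl_preserved:
  assumes "gen_inf_rigid_cyl V E"
  shows "gen_inf_rigid_cyl V' E'"
  unfolding gen_inf_rigid_cyl_def
proof (intro allI impI)
  fix p' assume gen: "generic_cyl V' p'"
  have "K \<subseteq> V'"
    by (auto simp: V'_eq)
  with gen assms show "inf_rigid V' E' p'"
    by (intro inf_rigid_if_kernels_trivial K4_pinned_kernel_trivial[OF distinct]
        outer_rows_kernel_trivial) (simp_all add: generic_cyl_def)
qed

end

theorem corollary5p3:
  fixes V V' :: "'a set" and E E' :: "'a set set"
  assumes "simple_graph V E"
    and "vertex_to_K4 V E V' E'"
    and "gen_inf_rigid_cyl V E"
  shows "gen_inf_rigid_cyl V' E'"
proof -
  from assms(2) obtain v w1 w2 w3 w4 c where "v \<in> V" "distinct [w1, w2, w3, w4]"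
    "{w1, w2, w3, w4} \<inter> V = {}" "\<forall>x. {x, v} \<in> E \<longrightarrow> c x \<in> {w1, w2, w3, w4}"
    "V' = (V - {v}) \<union> {w1, w2, w3, w4}"
    "E' = {e \<in> E. v \<notin> e} \<union> {{x, c x} | x. {x, v} \<in> E}
      \<union> {{a, b} | a b. a \<in> {w1, w2, w3, w4} \<and> b \<in> {w1, w2, w3, w4} \<and> a \<noteq> b}"
    unfolding vertex_to_K4_def by blast
  with assms(1) have "vertex_to_K4_move V V' E E' v w1 w2 w3 w4 c"
    by unfold_locales simp_all
  then show ?thesis
    using assms(3) by (rule vertex_to_K4_move.gen_inf_rigid_cyl_preserved)
qed

end
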